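(* Let $\mathbf{X}$ be an $N$-sgrp over $\mathbb{R}^d$ on $[0,T]$ and $(f_1,\dots,f_d)$ smooth vector fields on $\mathbb{R}^e$ with bounded derivatives of all orders. A path $Y:[0,T]\to\mathbb{R}^e$ is a solution of the differential equation driven by $\mathbf{X}$ with vector fields $(f_1,\dots,f_d)$ if and only if for all $s,t\in[0,T]$ $$Y_t-Y_s=\sum_{1\le|w|\le N}f_w(Y_s)\langle\mathbf{X}_{s,t},w\rangle+r_{s,t},$$ where $\mathbf{X}_{s,t}=\mathbf{X}_s^{-1}\otimes_N\mathbf{X}_t$ and $r_{s,t}=o(|t-s|)$ as $t\to s$.
   Context: Fix $T>0$, $d,e\ge1$. $T^N(\mathbb{R}^d)$: span of words $w$ in letters $\{1,\dots,d\}$ of length $|w|\le N$ (incl. empty word $\mathbf{1}$), with truncated concatenation product $\otimes_N$; $\langle\mathbf{x},w\rangle$ is the coefficient of $w$ in $\mathbf{x}$. Shuffle product: bilinear, unit $\mathbf{1}$, $wi\sqcup\!\sqcup vj=(w\sqcup\!\sqcup vj)i+(wi\sqcup\!\sqcup v)j$. An $N$-sgrp is a non-zero path $\mathbf{X}:[0,T]\to T^N(\mathbb{R}^d)$ with $\langle\mathbf{X}_t,v\sqcup\!\sqcup w\rangle=\langle\mathbf{X}_t,v\rangle\langle\mathbf{X}_t,w\rangle$ for all $t$ and words with $|v|+|w|\le N$, and with $t\mapsto\langle\mathbf{X}_t,w\rangle$ smooth for $|w|\le N$ (then $\langle\mathbf{X}_t,\mathbf{1}\rangle=1$ and $\mathbf{X}_t$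 is $\otimes_N$-invertible). Its diagonal derivative is $\dot{\mathbf{X}}_{s,s}=\partial_t|_{t=s}\mathbf{X}_{s,t}$ with $\mathbf{X}_{s,t}=\mathbf{X}_s^{-1}\otimes_N\mathbf{X}_t$. For vector fields $f=f^i\partial_i$, $g=g^j\partial_j$ on $\mathbb{R}^e$ let $f\vartriangleright g:=f^i(\partial_ig^j)\partial_j$. Set $f_{\mathbf{1}}=\mathrm{id}$ and for $w=\ell_1\cdots\ell_n$, $n\ge1$, $f_w:=f_{\ell_1}\vartriangleright(\cdots\vartriangleright(f_{\ell_{n-1}}\vartriangleright f_{\ell_n})\cdots)$. A smooth path $Y$ is a solution of the differential equation driven by $\mathbf{X}$ with vector fields $(f_1,\dots,f_d)$ if $\dot Y_s=\sum_{|w|\le N}f_w(Y_s)\langle\dot{\mathbf{X}}_{s,s},w\rangle$ for all $s$ (note $\langle\dot{\mathbf{X}}_{s,s},\mathbf{1}\rangle=0$). *)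

theory Defs
  imports "HOL-Analysis.Analysis" "HOL-Library.Landau_Symbols"
begin

text \<open>Elements of the truncated
tensor algebra T^N(R^d) are represented by their coefficient functions
(word \<Rightarrow> real), vanishing outside the words of length \<le> N.\<close>

definition words :: "nat \<Rightarrow> nat \<Rightarrow> nat list set" where
  "words d N = {w. set w \<subseteq> {1..d} \<and> length w \<le> N}"

definition tens :: "nat \<Rightarrow> nat \<Rightarrow> (nat list \<Rightarrow> real) set" where
  "tens d N = {x. \<forall>w. w \<notin> words d N \<longrightarrow> x w = 0}"

definition tunit :: "nat list \<Rightarrow> real" where
  "tunit w = (if w = [] then 1 else 0)"

definition tprod :: "nat \<Rightarrow> nat \<Rightarrow> (nat list \<Rightarrow> real) \<Rightarrow> (nat list \<Rightarrow> real) \<Rightarrow> (nat list \<Rightarrow> real)" where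
  "tprod d N x y w = (if w \<in> words d N then (\<Sum>i\<le>length w. x (take i w) * y (drop i w)) else 0)"

definition tinv :: "nat \<Rightarrow> nat \<Rightarrow> (nat list \<Rightarrow> real) \<Rightarrow> (nat list \<Rightarrow> real)" where
  "tinv d N x = (THE y. y \<in> tens d N \<and> tprod d N x y = tunit \<and> tprod d N y x = tunit)"

definition incr :: "nat \<Rightarrow> nat \<Rightarrow> (real \<Rightarrow> nat list \<Rightarrow> real) \<Rightarrow> real \<Rightarrow> real \<Rightarrow> nat list \<Rightarrow> real" where
  "incr d N X s t = tprod d N (tinv d N (X s)) (X t)"

text \<open>Shuffle product with multiplicities (a list of words = formal sum), following
w i \<sqcup> v j = (w \<sqcup> v j) i + (w i \<sqcup> v) j, realised by reversing the front recursion.\<close>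
fun shuffle_front :: "'a list \<Rightarrow> 'a list \<Rightarrow> 'a list list" where
  "shuffle_front [] v = [v]"
| "shuffle_front w [] = [w]"
| "shuffle_front (i # w) (j # v) =
     map (Cons i) (shuffle_front w (j # v)) @ map (Cons j) (shuffle_front (i # w) v)"

definition shuffle :: "'a list \<Rightarrow> 'a list \<Rightarrow> 'a list list" where
  "shuffle w v = map rev (shuffle_front (rev w) (rev v))"

definition pair_shuffle :: "(nat list \<Rightarrow> real) \<Rightarrow> nat list \<Rightarrow> nat list \<Rightarrow> real" where
  "pair_shuffle x v w = sum_list (map x (shuffle v w))"

text \<open>Smoothness (C^\<infinity>) on a set, with one-sided derivatives at boundary points.\<close>
definition smooth_on :: "real set \<Rightarrow> (real \<Rightarrow> 'a::real_normed_vector) \<Rightarrow> bool" where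
  "smooth_on S g \<longleftrightarrow> (\<exists>D. D 0 = g \<and>
      (\<forall>k. \<forall>t\<in>S. (D k has_vector_derivative D (Suc k) t) (at t within S)))"

definition sgrp :: "nat \<Rightarrow> nat \<Rightarrow> real \<Rightarrow> (real \<Rightarrow> nat list \<Rightarrow> real) \<Rightarrow> bool" where
  "sgrp d N T X \<longleftrightarrow>
     (\<forall>t\<in>{0..T}. X t \<in> tens d N)
   \<and> (\<exists>t\<in>{0..T}. X t \<noteq> (\<lambda>_. 0))
   \<and> (\<forall>t\<in>{0..T}. \<forall>v w. set v \<subseteq> {1..d} \<longrightarrow> set w \<subseteq> {1..d} \<longrightarrow>
        length v + length w \<le> N \<longrightarrow> pair_shuffle (X t) v w = X t v * X t w)
   \<and> (\<forall>w\<in>words d N. smooth_on {0..T} (\<lambda>t. X t w))"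

definition diag_deriv :: "nat \<Rightarrow> nat \<Rightarrow> real \<Rightarrow> (real \<Rightarrow> nat list \<Rightarrow> real) \<Rightarrow> real \<Rightarrow> nat list \<Rightarrow> real" where
  "diag_deriv d N T X s w = vector_derivative (\<lambda>t. incr d N X s t w) (at s within {0..T})"

text \<open>Vector fields on R^e. (f \<rhd> g)(y) = Dg(y) f(y), i.e. f^i (\<partial>_i g^j) \<partial>_j.\<close>
type_synonym 'e vfield = "real ^ 'e \<Rightarrow> real ^ 'e"

definition vf_tri :: "'e::finite vfield \<Rightarrow> 'e vfield \<Rightarrow> 'e vfield" where
  "vf_tri g h = (\<lambda>y. frechet_derivative h (at y) (g y))"

fun fw :: "(nat \<Rightarrow> 'e::finite vfield) \<Rightarrow> nat list \<Rightarrow> 'e vfield" where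
  "fw f [] = id"
| "fw f [l] = f l"
| "fw f (l # m # w) = vf_tri (f l) (fw f (m # w))"

definition pd :: "'e::finite \<Rightarrow> 'e vfield \<Rightarrow> 'e vfield" where
  "pd i g = (\<lambda>y. frechet_derivative g (at y) (axis i 1))"

fun iter_pd :: "'e::finite list \<Rightarrow> 'e vfield \<Rightarrow> 'e vfield" where
  "iter_pd [] g = g"
| "iter_pd (i # is) g = pd i (iter_pd is g)"

definition smooth_bdd :: "'e::finite vfield \<Rightarrow> bool" where
  "smooth_bdd g \<longleftrightarrow> (\<forall>is. (\<forall>y. iter_pd is g differentiable (at y))
                         \<and> (is \<noteq> [] \<longrightarrow> bounded (range (iter_pd is g))))"

definition is_solution :: "nat \<Rightarrow> nat \<Rightarrow> real \<Rightarrow> (real \<Rightarrow> nat list \<Rightarrow> real) \<Rightarrow>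
    (nat \<Rightarrow> 'e::finite vfield) \<Rightarrow> (real \<Rightarrow> real ^ 'e) \<Rightarrow> bool" where
  "is_solution d N T X f Y \<longleftrightarrow> smooth_on {0..T} Y \<and>
     (\<forall>s\<in>{0..T}. (Y has_vector_derivative
        (\<Sum>w\<in>words d N. diag_deriv d N T X s w *\<^sub>R fw f w (Y s))) (at s within {0..T}))"

end

theory Submission
  imports Defs
begin

text \<open>
  Fix \<open>s\<close> and let \<open>R t\<close> be the sum over the non-empty words \<open>w\<close> of
  \<open>incr d N X s t w *\<^sub>R fw f w (Y s)\<close>. Because \<open>incr d N X s s\<close> is the unit, \<open>R s = 0\<close>, and by the
  definition of the diagonal derivative, \<open>R\<close> has derivative
  \<open>\<Sum>w. diag_deriv d N T X s w *\<^sub>R fw f w (Y s)\<close> at \<open>t = s\<close> (the empty word contributes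
  nothing, as \<open>incr d N X s t [] = 1\<close>). So the remainder \<open>Y t - Y s - R t\<close> is \<open>o(t - s)\<close>
  exactly when \<open>Y\<close> has the derivative required of a solution at \<open>s\<close>. What remains is
  regularity: such a \<open>Y\<close> is automatically smooth, because the coefficients
  \<open>diag_deriv d N T X s w\<close> are smooth in \<open>s\<close> (the coefficients of \<open>tinv d N (X s)\<close> are
  polynomials in those of \<open>X s\<close>) and the \<open>fw f w\<close> are smooth, so \<open>Y\<close> is \<open>C\<^sup>k\<close> for every \<open>k\<close> by
  bootstrapping.
\<close>

section \<open>The truncated tensor algebra\<close>

lemma words_Nil [simp]: "[] \<in> words d N"
  by (simp add: words_def)

lemma words_take: "w \<in> words d N \<Longrightarrow> take i w \<in> words d N"
  by (auto simp: words_def dest: in_set_takeD)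

lemma words_drop: "w \<in> words d N \<Longrightarrow> drop i w \<in> words d N"
  by (auto simp: words_def dest: in_set_dropD)

lemma finite_words: "finite (words d N)"
  unfolding words_def by (rule finite_lists_length_le) simp

lemma tprod_eq: "w \<in> words d N \<Longrightarrow> tprod d N x y w = (\<Sum>i\<le>length w. x (take i w) * y (drop i w))"
  by (simp add: tprod_def)

lemma tprod_tunit_left: "y \<in> tens d N \<Longrightarrow> tprod d N tunit y = y"
proof
  fix w assume y: "y \<in> tens d N"
  have "(\<Sum>i\<le>length w. tunit (take i w) * y (drop i w)) = y w"
    by (subst sum.mono_neutral_right[where S="{0}"]) (auto simp: tunit_def)
  then show "tprod d N tunit y w = y w"
    using y by (simp add: tprod_def tens_def)
qed

lemma tprod_tunit_right: "y \<in> tens d N \<Longrightarrow> tprod d N y tunit = y"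
proof
  fix w assume y: "y \<in> tens d N"
  have "(\<Sum>i\<le>length w. y (take i w) * tunit (drop i w)) = y w"
    by (subst sum.mono_neutral_right[where S="{length w}"]) (auto simp: tunit_def)
  then show "tprod d N y tunit w = y w"
    using y by (simp add: tprod_def tens_def)
qed

lemma tprod_assoc: "tprod d N (tprod d N a b) c = tprod d N a (tprod d N b c)"
proof
  fix w
  show "tprod d N (tprod d N a b) c w = tprod d N a (tprod d N b c) w"
  proof (cases "w \<in> words d N")
    case False
    then show ?thesis by (simp add: tprod_def)
  next
    case w: True
    define n where "n = length w"
    define g where "g j k = a (take j w) * b (take k (drop j w)) * c (drop (j + k) w)" for j k
    have "tprod d N (tprod d N a b) c w = (\<Sum>i\<le>n. \<Sum>j\<le>i. g j (i - j))"
      using w by (auto simp: tprod_eq words_take n_def g_def sum_distrib_right min_def take_drop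
          intro!: sum.cong)
    also have "\<dots> = (\<Sum>(j, k)\<in>{(j, k). j + k \<le> n}. g j k)"
      by (rule sum.triangle_reindex_eq[symmetric])
    also have "\<dots> = (\<Sum>j\<le>n. \<Sum>k\<le>n - j. g j k)"
    proof -
      have "{(j, k). j + k \<le> n} = Sigma {..n} (\<lambda>j. {..n - j})"
        by auto
      then show ?thesis by (simp add: sum.Sigma)
    qed
    also have "\<dots> = tprod d N a (tprod d N b c) w"
      using w by (auto simp: tprod_eq words_drop n_def g_def sum_distrib_left mult.assoc add.commute
          intro!: sum.cong)
    finally show ?thesis .
  qed
qed

function rinv :: "nat \<Rightarrow> nat \<Rightarrow> (nat list \<Rightarrow> real) \<Rightarrow> nat list \<Rightarrow> real" where
  "rinv d N x w =
     (if w \<in> words d N then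
        if w = [] then 1 else - (\<Sum>i\<in>{1..length w}. x (take i w) * rinv d N x (drop i w))
      else 0)"
  by auto
termination by (relation "Wellfounded.measure (\<lambda>(_, _, _, w). length w)") auto

declare rinv.simps [simp del]

lemma rinv_in_tens: "rinv d N x \<in> tens d N"
  unfolding tens_def by (auto intro: trans[OF rinv.simps])

lemma rinv_Nil [simp]: "rinv d N x [] = 1"
  by (simp add: rinv.simps)

lemma tprod_rinv: "x [] = 1 \<Longrightarrow> tprod d N x (rinv d N x) = tunit"
proof
  fix w assume x: "x [] = 1"
  show "tprod d N x (rinv d N x) w = tunit w"
  proof (cases "w \<in> words d N \<and> w \<noteq> []")
    case True
    have "{..length w} = insert 0 {1..length w}" by auto
    then have "tprod d N x (rinv d N x) w
        = rinv d N x w + (\<Sum>i\<in>{1..length w}. x (take i w) * rinv d N x (drop i w))"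
      using True x by (simp add: tprod_def)
    also have "\<dots> = 0"
      using True by (subst rinv.simps) simp
    finally show ?thesis using True by (simp add: tunit_def)
  qed (auto simp: tprod_def tunit_def x)
qed

lemma
  assumes "x \<in> tens d N" and "x [] = 1"
  shows tinv_eq_rinv: "tinv d N x = rinv d N x"
    and tprod_tinv_left: "tprod d N (tinv d N x) x = tunit"
proof -
  let ?y = "rinv d N x"
  have xy: "tprod d N x ?y = tunit"
    using assms(2) by (rule tprod_rinv)
  have "x = tprod d N (tprod d N x ?y) (rinv d N ?y)"
    by (simp add: tprod_assoc tprod_rinv tprod_tunit_right assms(1))
  then have "x = rinv d N ?y"
    by (simp add: xy tprod_tunit_left rinv_in_tens)
  then have yx: "tprod d N ?y x = tunit"
    by (metis rinv_Nil tprod_rinv)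
  have "z = ?y" if "z \<in> tens d N" "tprod d N z x = tunit" for z
  proof -
    have "z = tprod d N (tprod d N z x) ?y"
      by (simp add: tprod_assoc xy tprod_tunit_right that(1))
    then show ?thesis
      by (simp add: that(2) tprod_tunit_left rinv_in_tens)
  qed
  then have "tinv d N x = ?y"
    unfolding tinv_def using xy yx rinv_in_tens by (intro the_equality) auto
  then show "tinv d N x = ?y" "tprod d N (tinv d N x) x = tunit"
    using yx by auto
qed

section \<open>Paths of class \<open>C\<^sup>k\<close>\<close>

text \<open>The truncation of \<^const>\<open>smooth_on\<close> after \<open>k\<close> derivatives; unlike
  \<^const>\<open>smooth_on\<close>, it can be established by induction on \<open>k\<close>.\<close>

definition ck_on :: "nat \<Rightarrow> real set \<Rightarrow> (real \<Rightarrow> 'a::real_normed_vector) \<Rightarrow> bool" where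
  "ck_on k S h \<longleftrightarrow> (\<exists>D. D 0 = h \<and>
      (\<forall>j<k. \<forall>t\<in>S. (D j has_vector_derivative D (Suc j) t) (at t within S)))"

lemma ck_on_0 [simp]: "ck_on 0 S h"
  by (auto simp: ck_on_def)

lemma ck_on_Suc:
  "ck_on (Suc k) S h \<longleftrightarrow>
     (\<exists>h'. (\<forall>t\<in>S. (h has_vector_derivative h' t) (at t within S)) \<and> ck_on k S h')"
proof
  assume "ck_on (Suc k) S h"
  then obtain D where "D 0 = h"
    and D: "\<forall>j<Suc k. \<forall>t\<in>S. (D j has_vector_derivative D (Suc j) t) (at t within S)"
    by (auto simp: ck_on_def)
  moreover have "ck_on k S (D 1)"
    unfolding ck_on_def using D by (intro exI[of _ "\<lambda>j. D (Suc j)"]) auto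
  ultimately show "\<exists>h'. (\<forall>t\<in>S. (h has_vector_derivative h' t) (at t within S)) \<and> ck_on k S h'"
    by auto
next
  assume "\<exists>h'. (\<forall>t\<in>S. (h has_vector_derivative h' t) (at t within S)) \<and> ck_on k S h'"
  then obtain h' D where h': "\<forall>t\<in>S. (h has_vector_derivative h' t) (at t within S)"
    and "D 0 = h'" and D: "\<forall>j<k. \<forall>t\<in>S. (D j has_vector_derivative D (Suc j) t) (at t within S)"
    by (auto simp: ck_on_def)
  then show "ck_on (Suc k) S h"
    unfolding ck_on_def
    by (intro exI[of _ "case_nat h D"]) (auto simp: less_Suc_eq_0_disj)
qed

lemma ck_on_SucD: "ck_on (Suc k) S h \<Longrightarrow> ck_on k S h"
  by (auto simp: ck_on_def)

lemma smooth_on_imp_ck_on: "smooth_on S h \<Longrightarrow> ck_on k S h"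
  by (auto simp: smooth_on_def ck_on_def)

lemma smooth_on_has_vector_derivative:
  assumes "smooth_on S h"
  shows "\<exists>h'. (\<forall>t\<in>S. (h has_vector_derivative h' t) (at t within S)) \<and> smooth_on S h'"
proof -
  obtain D where D0: "D 0 = h"
    and D: "\<forall>k. \<forall>t\<in>S. (D k has_vector_derivative D (Suc k) t) (at t within S)"
    using assms by (auto simp: smooth_on_def)
  have "smooth_on S (D 1)"
    unfolding smooth_on_def using D by (intro exI[of _ "\<lambda>k. D (Suc k)"]) auto
  moreover have "\<forall>t\<in>S. (h has_vector_derivative D 1 t) (at t within S)"
    using D unfolding D0[symmetric] by simp
  ultimately show ?thesis
    by blast
qed

lemma smooth_on_imp_continuous_on: "smooth_on S h \<Longrightarrow> continuous_on S h"
  using smooth_on_has_vector_derivative continuous_on_vector_derivative by blast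

lemma smooth_on_if_ck_on:
  fixes h :: "real \<Rightarrow> 'a::euclidean_space"
  assumes "a < b" and ck: "\<And>k. ck_on k {a..b} h"
  shows "smooth_on {a..b} h"
proof -
  \<comment> \<open>The witnesses of \<open>ck_on k\<close> may depend on \<open>k\<close>, but derivatives within a non-degenerate
      interval are unique, so the iterated vector derivatives serve for all \<open>k\<close> at once.\<close>
  define D where "D j = ((\<lambda>g t. vector_derivative g (at t within {a..b})) ^^ j) h" for j
  have D_Suc: "D (Suc j) t = vector_derivative (D j) (at t within {a..b})" for j t
    by (simp add: D_def)
  have "(D j has_vector_derivative D (Suc j) t) (at t within {a..b})" if t: "t \<in> {a..b}" for j t
  proof -
    obtain E where "E 0 = h" and E: "\<forall>i<Suc j. \<forall>t\<in>{a..b}.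
        (E i has_vector_derivative E (Suc i) t) (at t within {a..b})"
      using ck[of "Suc j"] by (auto simp: ck_on_def)
    have DE: "\<forall>t\<in>{a..b}. D i t = E i t" if "i \<le> Suc j" for i
      using that
    proof (induction i)
      case 0
      show ?case by (simp add: D_def \<open>E 0 = h\<close>)
    next
      case (Suc i)
      have DE_i: "\<forall>t\<in>{a..b}. D i t = E i t"
        using Suc by simp
      have "(D i has_vector_derivative E (Suc i) t) (at t within {a..b})" if "t \<in> {a..b}" for t
      proof (rule has_vector_derivative_weaken)
        show "(E i has_vector_derivative E (Suc i) t) (at t within {a..b})"
          using E Suc.prems that by simp
      qed (use DE_i that in auto)
      then show ?case
        using \<open>a < b\<close> by (simp add: D_Suc vector_derivative_within_closed_interval)
    qed
    show ?thesis
    proof (rule has_vector_derivative_weaken)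
      show "(E j has_vector_derivative D (Suc j) t) (at t within {a..b})"
        using E DE[of "Suc j"] t by simp
    qed (use DE t in auto)
  qed
  then show ?thesis
    unfolding smooth_on_def by (intro exI[of _ D]) (simp add: D_def)
qed

lemma ck_on_cong:
  assumes "ck_on k S h" and "\<And>t. t \<in> S \<Longrightarrow> h t = g t"
  shows "ck_on k S g"
proof (cases k)
  case (Suc k')
  then obtain h' where h': "\<And>t. t \<in> S \<Longrightarrow> (h has_vector_derivative h' t) (at t within S)"
    and "ck_on k' S h'"
    using assms(1) unfolding Suc ck_on_Suc by blast
  moreover have "(g has_vector_derivative h' t) (at t within S)" if "t \<in> S" for t
    by (rule has_vector_derivative_weaken[OF h'[OF that] that]) (auto simp: assms(2))
  ultimately show ?thesis
    unfolding Suc ck_on_Suc by blast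
qed simp

lemma ck_on_const: "ck_on k S (\<lambda>t. c)"
  unfolding ck_on_def by (intro exI[of _ "\<lambda>j t. if j = 0 then c else 0"]) auto

lemma ck_on_add:
  assumes "ck_on k S u" and "ck_on k S v"
  shows "ck_on k S (\<lambda>t. u t + v t)"
proof -
  obtain D E where "D 0 = u" "E 0 = v"
    and "\<forall>j<k. \<forall>t\<in>S. (D j has_vector_derivative D (Suc j) t) (at t within S)"
    and "\<forall>j<k. \<forall>t\<in>S. (E j has_vector_derivative E (Suc j) t) (at t within S)"
    using assms by (auto simp: ck_on_def)
  then show ?thesis
    unfolding ck_on_def by (auto intro!: exI[of _ "\<lambda>j t. D j t + E j t"] has_vector_derivative_add)
qed

lemma ck_on_sum:
  "finite A \<Longrightarrow> (\<And>a. a \<in> A \<Longrightarrow> ck_on k S (F a)) \<Longrightarrow> ck_on k S (\<lambda>t. \<Sum>a\<in>A. F a t)"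
  by (induction A rule: finite_induct) (auto intro: ck_on_add ck_on_const)

lemma ck_on_bounded_linear:
  assumes "bounded_linear L" and "ck_on k S h"
  shows "ck_on k S (\<lambda>t. L (h t))"
proof -
  obtain D where "D 0 = h"
    and "\<forall>j<k. \<forall>t\<in>S. (D j has_vector_derivative D (Suc j) t) (at t within S)"
    using assms(2) by (auto simp: ck_on_def)
  then show ?thesis
    unfolding ck_on_def
    by (auto intro!: exI[of _ "\<lambda>j t. L (D j t)"] bounded_linear.has_vector_derivative[OF assms(1)])
qed

lemma ck_on_scaleR:
  fixes u :: "real \<Rightarrow> real"
  shows "ck_on k S u \<Longrightarrow> ck_on k S v \<Longrightarrow> ck_on k S (\<lambda>t. u t *\<^sub>R v t)"
proof (induction k arbitrary: u v)
  case (Suc k)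
  obtain u' v' where u': "\<forall>t\<in>S. (u has_vector_derivative u' t) (at t within S)" "ck_on k S u'"
    and v': "\<forall>t\<in>S. (v has_vector_derivative v' t) (at t within S)" "ck_on k S v'"
    using Suc.prems unfolding ck_on_Suc by blast
  have u: "ck_on k S u" and v: "ck_on k S v"
    using Suc.prems by (simp_all add: ck_on_SucD)
  show ?case
    unfolding ck_on_Suc
  proof (intro exI[of _ "\<lambda>t. u t *\<^sub>R v' t + u' t *\<^sub>R v t"] conjI ballI)
    fix t assume "t \<in> S"
    then show "((\<lambda>t. u t *\<^sub>R v t) has_vector_derivative u t *\<^sub>R v' t + u' t *\<^sub>R v t) (at t within S)"
      using u'(1) v'(1)
      by (intro has_vector_derivative_scaleR) (auto simp: has_real_derivative_iff_has_vector_derivative)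
  next
    show "ck_on k S (\<lambda>t. u t *\<^sub>R v' t + u' t *\<^sub>R v t)"
      by (intro ck_on_add Suc.IH u v u'(2) v'(2))
  qed
qed simp

lemma ck_on_mult:
  fixes u v :: "real \<Rightarrow> real"
  shows "ck_on k S u \<Longrightarrow> ck_on k S v \<Longrightarrow> ck_on k S (\<lambda>t. u t * v t)"
  using ck_on_scaleR[of k S u v] by simp

section \<open>Smooth vector fields\<close>

definition pd_differentiable :: "nat \<Rightarrow> 'e::finite vfield \<Rightarrow> bool" where
  "pd_differentiable n g \<longleftrightarrow> (\<forall>is. length is \<le> n \<longrightarrow> (\<forall>y. iter_pd is g differentiable (at y)))"

definition smooth_field :: "'e::finite vfield \<Rightarrow> bool" where
  "smooth_field g \<longleftrightarrow> (\<forall>n. pd_differentiable n g)"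

lemma iter_pd_snoc: "iter_pd (is @ [i]) g = iter_pd is (pd i g)"
  by (induction "is") auto

lemma pd_differentiable_0 [simp]: "pd_differentiable 0 g \<longleftrightarrow> (\<forall>y. g differentiable (at y))"
  by (simp add: pd_differentiable_def)

lemma pd_differentiable_Suc:
  fixes g :: "'e::finite vfield"
  shows "pd_differentiable (Suc n) g \<longleftrightarrow>
    (\<forall>y. g differentiable (at y)) \<and> (\<forall>i. pd_differentiable n (pd i g))"
  unfolding pd_differentiable_def
proof safe
  fix i :: 'e and "is" :: "'e list" and y
  assume "\<forall>is. length is \<le> Suc n \<longrightarrow> (\<forall>y. iter_pd is g differentiable (at y))" "length is \<le> n"
  then show "iter_pd is (pd i g) differentiable (at y)"
    by (metis iter_pd_snoc length_append_singleton not_less_eq_eq)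
next
  fix "is" :: "'e list" and y
  assume "\<forall>y. g differentiable (at y)"
    and "\<forall>i. \<forall>is. length is \<le> n \<longrightarrow> (\<forall>y. iter_pd is (pd i g) differentiable (at y))"
    and "length is \<le> Suc n"
  then show "iter_pd is g differentiable (at y)"
    by (cases "is" rule: rev_exhaust) (auto simp: iter_pd_snoc)
qed (metis iter_pd.simps(1) list.size(3) zero_le)

lemma pd_differentiable_SucD: "pd_differentiable (Suc n) g \<Longrightarrow> pd_differentiable n g"
  by (simp add: pd_differentiable_def)

lemma smooth_field_differentiable: "smooth_field g \<Longrightarrow> g differentiable (at y)"
  unfolding smooth_field_def using pd_differentiable_0 by blast

lemma smooth_field_pd: "smooth_field g \<Longrightarrow> smooth_field (pd i g)"
  unfolding smooth_field_def using pd_differentiable_Suc by blast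

lemma smooth_bdd_imp_smooth_field: "smooth_bdd g \<Longrightarrow> smooth_field g"
  by (simp add: smooth_bdd_def smooth_field_def pd_differentiable_def)

lemma pd_eq_has_derivative: "(g has_derivative g') (at y) \<Longrightarrow> pd i g y = g' (axis i 1)"
  unfolding pd_def by (simp flip: frechet_derivative_at)

lemma pd_differentiable_const: "pd_differentiable n (\<lambda>y. c)"
proof (induction n arbitrary: c)
  case (Suc n)
  have "pd i (\<lambda>y. c) = (\<lambda>y. 0)" for i
    by (rule ext, rule pd_eq_has_derivative) (rule has_derivative_const)
  then show ?case
    using Suc by (simp add: pd_differentiable_Suc)
qed simp

lemma pd_add:
  assumes "A differentiable (at y)" and "B differentiable (at y)"
  shows "pd i (\<lambda>y. A y + B y) y = pd i A y + pd i B y"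
proof -
  have "((\<lambda>y. A y + B y) has_derivative
      (\<lambda>v. frechet_derivative A (at y) v + frechet_derivative B (at y) v)) (at y)"
    using assms by (intro has_derivative_add) (simp_all flip: frechet_derivative_works)
  from pd_eq_has_derivative[OF this, of i] show ?thesis
    by (simp add: pd_def)
qed

lemma pd_differentiable_add:
  "pd_differentiable n A \<Longrightarrow> pd_differentiable n B \<Longrightarrow> pd_differentiable n (\<lambda>y. A y + B y)"
proof (induction n arbitrary: A B)
  case 0
  then show ?case by simp
next
  case (Suc n)
  then have "\<forall>y. A differentiable (at y)" "\<forall>y. B differentiable (at y)"
    by (simp_all add: pd_differentiable_Suc)
  then have "pd i (\<lambda>y. A y + B y) = (\<lambda>y. pd i A y + pd i B y)" for i
    by (simp add: pd_add fun_eq_iff)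
  then show ?case
    using Suc by (simp add: pd_differentiable_Suc)
qed

lemma pd_differentiable_sum:
  "finite A \<Longrightarrow> (\<And>a. a \<in> A \<Longrightarrow> pd_differentiable n (F a)) \<Longrightarrow>
    pd_differentiable n (\<lambda>y. \<Sum>a\<in>A. F a y)"
  by (induction A rule: finite_induct) (auto intro: pd_differentiable_add pd_differentiable_const)

lemma differentiable_vec_nth:
  "g differentiable (at y) \<Longrightarrow> (\<lambda>y. g y $ j) differentiable (at y)"
  using differentiable_chain_at[OF _ bounded_linear_imp_differentiable[OF bounded_linear_vec_nth]]
  by (simp add: comp_def)

lemma pd_scale_nth:
  fixes g h :: "'e::finite vfield"
  assumes "g differentiable (at y)" and "h differentiable (at y)"
  shows "pd i (\<lambda>y. (g y $ j) *\<^sub>R h y) y = (g y $ j) *\<^sub>R pd i h y + (pd i g y $ j) *\<^sub>R h y"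
proof -
  have "((\<lambda>y. g y $ j) has_derivative (\<lambda>v. frechet_derivative g (at y) v $ j)) (at y)"
    using assms(1) by (intro bounded_linear.has_derivative[OF bounded_linear_vec_nth])
      (simp flip: frechet_derivative_works)
  then have "((\<lambda>y. (g y $ j) *\<^sub>R h y) has_derivative
      (\<lambda>v. (g y $ j) *\<^sub>R frechet_derivative h (at y) v + (frechet_derivative g (at y) v $ j) *\<^sub>R h y))
      (at y)"
    using assms(2) by (intro has_derivative_scaleR) (simp_all flip: frechet_derivative_works)
  from pd_eq_has_derivative[OF this, of i] show ?thesis
    by (simp add: pd_def)
qed

lemma pd_differentiable_scale_nth:
  fixes g h :: "'e::finite vfield"
  shows "pd_differentiable n g \<Longrightarrow> pd_differentiable n h \<Longrightarrow>
    pd_differentiable n (\<lambda>y. (g y $ j) *\<^sub>R h y)"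
proof (induction n arbitrary: g h)
  case 0
  then show ?case
    by (simp add: differentiable_vec_nth)
next
  case (Suc n)
  then have g: "\<forall>y. g differentiable (at y)" and h: "\<forall>y. h differentiable (at y)"
    by (simp_all add: pd_differentiable_Suc)
  then have "pd i (\<lambda>y. (g y $ j) *\<^sub>R h y) = (\<lambda>y. (g y $ j) *\<^sub>R pd i h y + (pd i g y $ j) *\<^sub>R h y)" for i
    by (simp add: pd_scale_nth fun_eq_iff)
  moreover have "pd_differentiable n g" "pd_differentiable n h"
    "\<forall>i. pd_differentiable n (pd i g)" "\<forall>i. pd_differentiable n (pd i h)"
    using Suc.prems by (simp_all add: pd_differentiable_Suc pd_differentiable_SucD)
  ultimately show ?case
    using g h by (simp add: pd_differentiable_Suc pd_differentiable_add Suc.IH differentiable_vec_nth)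
qed

lemma frechet_derivative_eq_sum_pd:
  fixes h :: "'e::finite vfield"
  assumes "h differentiable (at y)"
  shows "frechet_derivative h (at y) v = (\<Sum>j\<in>UNIV. (v $ j) *\<^sub>R pd j h y)"
proof -
  have lin: "linear (frechet_derivative h (at y))"
    using assms frechet_derivative_works has_derivative_linear by blast
  have "v = (\<Sum>j\<in>UNIV. (v $ j) *\<^sub>R axis j 1)"
    using basis_expansion[of v] by (simp add: scalar_mult_eq_scaleR)
  then have "frechet_derivative h (at y) v
      = frechet_derivative h (at y) (\<Sum>j\<in>UNIV. (v $ j) *\<^sub>R axis j 1)"
    by (rule arg_cong)
  also have "\<dots> = (\<Sum>j\<in>UNIV. (v $ j) *\<^sub>R frechet_derivative h (at y) (axis j 1))"
    using lin by (simp add: linear_sum linear_scale)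
  finally show ?thesis
    by (simp add: pd_def)
qed

lemma smooth_field_vf_tri:
  assumes g: "smooth_field g" and h: "smooth_field h"
  shows "smooth_field (vf_tri g h)"
proof -
  have "vf_tri g h = (\<lambda>y. \<Sum>j\<in>UNIV. (g y $ j) *\<^sub>R pd j h y)"
    using h by (simp add: vf_tri_def fun_eq_iff frechet_derivative_eq_sum_pd smooth_field_differentiable)
  then show ?thesis
    using g smooth_field_pd[OF h] unfolding smooth_field_def
    by (auto intro!: pd_differentiable_sum pd_differentiable_scale_nth)
qed

lemma smooth_field_id: "smooth_field (id :: 'e::finite vfield)"
  unfolding smooth_field_def
proof
  fix n
  have "pd i (id :: 'e vfield) = (\<lambda>y. axis i 1)" for i
    by (rule ext, rule pd_eq_has_derivative) (simp add: id_def)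
  then show "pd_differentiable n (id :: 'e vfield)"
    by (cases n) (simp_all add: pd_differentiable_Suc pd_differentiable_const id_def)
qed

lemma smooth_field_fw:
  "(\<And>i. i \<in> set w \<Longrightarrow> smooth_bdd (f i)) \<Longrightarrow> smooth_field (fw f w)"
  by (induction f w rule: fw.induct)
    (auto simp: smooth_field_id smooth_bdd_imp_smooth_field intro!: smooth_field_vf_tri)

lemma ck_on_comp_smooth_field:
  fixes Y :: "real \<Rightarrow> real ^ 'e::finite"
  shows "ck_on k S Y \<Longrightarrow> smooth_field g \<Longrightarrow> ck_on k S (\<lambda>t. g (Y t))"
proof (induction k arbitrary: g)
  case (Suc k)
  obtain Y' where Y': "\<forall>t\<in>S. (Y has_vector_derivative Y' t) (at t within S)" "ck_on k S Y'"
    using Suc.prems(1) unfolding ck_on_Suc by blast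
  have Y: "ck_on k S Y"
    using Suc.prems(1) by (rule ck_on_SucD)
  show ?case
    unfolding ck_on_Suc
  proof (intro exI[of _ "\<lambda>t. \<Sum>j\<in>UNIV. (Y' t $ j) *\<^sub>R pd j g (Y t)"] conjI ballI)
    fix t assume t: "t \<in> S"
    have g: "g differentiable (at (Y t))"
      using Suc.prems(2) by (rule smooth_field_differentiable)
    then have "(g has_derivative frechet_derivative g (at (Y t))) (at (Y t) within Y ` S)"
      using frechet_derivative_works has_derivative_at_withinI by blast
    from vector_derivative_diff_chain_within[OF Y'(1)[rule_format, OF t] this]
    show "((\<lambda>t. g (Y t)) has_vector_derivative (\<Sum>j\<in>UNIV. (Y' t $ j) *\<^sub>R pd j g (Y t))) (at t within S)"
      by (simp add: comp_def frechet_derivative_eq_sum_pd[OF g])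
  next
    show "ck_on k S (\<lambda>t. \<Sum>j\<in>UNIV. (Y' t $ j) *\<^sub>R pd j g (Y t))"
      using Suc.IH[OF Y smooth_field_pd[OF Suc.prems(2)]]
        ck_on_bounded_linear[OF bounded_linear_vec_nth Y'(2)]
      by (intro ck_on_sum ck_on_scaleR) auto
  qed
qed simp

lemma smooth_on_ode_solution:
  fixes Y :: "real \<Rightarrow> real ^ 'e::finite"
  assumes "a < b" and "finite W"
    and c: "\<And>w k. w \<in> W \<Longrightarrow> ck_on k {a..b} (c w)"
    and g: "\<And>w. w \<in> W \<Longrightarrow> smooth_field (g w)"
    and Y: "\<And>s. s \<in> {a..b} \<Longrightarrow>
      (Y has_vector_derivative (\<Sum>w\<in>W. c w s *\<^sub>R g w (Y s))) (at s within {a..b})"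
  shows "smooth_on {a..b} Y"
proof (rule smooth_on_if_ck_on[OF \<open>a < b\<close>])
  show "ck_on k {a..b} Y" for k
  proof (induction k)
    case (Suc k)
    have "ck_on k {a..b} (\<lambda>s. \<Sum>w\<in>W. c w s *\<^sub>R g w (Y s))"
      using \<open>finite W\<close> c ck_on_comp_smooth_field[OF Suc.IH g] by (intro ck_on_sum ck_on_scaleR)
    then show ?case
      using Y unfolding ck_on_Suc by (intro exI[of _ "\<lambda>s. \<Sum>w\<in>W. c w s *\<^sub>R g w (Y s)"]) simp
  qed simp
qed

section \<open>Derivatives as little-o remainders\<close>

lemma has_vector_derivative_zero_iff_smallo:
  fixes e :: "real \<Rightarrow> 'a::real_normed_vector"
  assumes "e s = 0"
  shows "(e has_vector_derivative 0) (at s within S) \<longleftrightarrow>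
    (\<lambda>t. norm (e t)) \<in> o[at s within S](\<lambda>t. t - s)"
proof -
  have norm_eq: "(\<lambda>t. norm ((1 / norm (t - s)) *\<^sub>R e t)) = (\<lambda>t. \<bar>norm (e t) / (t - s)\<bar>)"
    by (simp add: abs_div fun_eq_iff)
  have "(e has_vector_derivative 0) (at s within S) \<longleftrightarrow>
      ((\<lambda>t. (1 / norm (t - s)) *\<^sub>R e t) \<longlongrightarrow> 0) (at s within S)"
    using assms by (simp add: has_vector_derivative_def has_derivative_within)
  also have "\<dots> \<longleftrightarrow> ((\<lambda>t. \<bar>norm (e t) / (t - s)\<bar>) \<longlongrightarrow> 0) (at s within S)"
    unfolding norm_eq[symmetric] by (rule tendsto_norm_zero_iff[symmetric])
  also have "\<dots> \<longleftrightarrow> ((\<lambda>t. norm (e t) / (t - s)) \<longlongrightarrow> 0) (at s within S)"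
    by (rule tendsto_rabs_zero_iff)
  also have "\<dots> \<longleftrightarrow> (\<lambda>t. norm (e t)) \<in> o[at s within S](\<lambda>t. t - s)"
    by (auto intro: smalloI_tendsto smalloD_tendsto simp: eventually_at_filter)
  finally show ?thesis .
qed

lemma has_vector_derivative_iff_smallo_remainder:
  fixes Y H :: "real \<Rightarrow> 'a::real_normed_vector"
  assumes H: "(H has_vector_derivative V) (at s within S)" and "H s = 0"
  shows "(Y has_vector_derivative V) (at s within S) \<longleftrightarrow>
    (\<lambda>t. norm (Y t - Y s - H t)) \<in> o[at s within S](\<lambda>t. t - s)"
proof -
  have "(Y has_vector_derivative V) (at s within S) \<longleftrightarrow>
      ((\<lambda>t. Y t - Y s - H t) has_vector_derivative 0) (at s within S)"
  proof
    assume "(Y has_vector_derivative V) (at s within S)"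
    from has_vector_derivative_diff[OF has_vector_derivative_diff[OF this has_vector_derivative_const[of "Y s"]] H]
    show "((\<lambda>t. Y t - Y s - H t) has_vector_derivative 0) (at s within S)"
      by simp
  next
    assume "((\<lambda>t. Y t - Y s - H t) has_vector_derivative 0) (at s within S)"
    from has_vector_derivative_add[OF has_vector_derivative_add[OF this has_vector_derivative_const[of "Y s"]] H]
    show "(Y has_vector_derivative V) (at s within S)"
      by simp
  qed
  also have "\<dots> \<longleftrightarrow> (\<lambda>t. norm (Y t - Y s - H t)) \<in> o[at s within S](\<lambda>t. t - s)"
    using \<open>H s = 0\<close> by (intro has_vector_derivative_zero_iff_smallo) simp
  finally show ?thesis .
qed

section \<open>Increments of a smooth geometric rough path\<close>

lemma pair_shuffle_Nil: "pair_shuffle x [] w = x w"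
  by (simp add: pair_shuffle_def shuffle_def)

lemma sgrp_unit:
  assumes sgrp: "sgrp d N T X" and t: "t \<in> {0..T}"
  shows "X t [] = 1"
proof -
  \<comment> \<open>Shuffling with the empty word gives \<open>X t w = X t [] * X t w\<close>; so \<open>X t []\<close> is a
      continuous \<open>{0, 1}\<close>-valued function, and it is not identically \<open>0\<close>.\<close>
  have tens: "\<And>t. t \<in> {0..T} \<Longrightarrow> X t \<in> tens d N"
    and nonzero: "\<exists>t\<in>{0..T}. X t \<noteq> (\<lambda>_. 0)"
    and smooth: "smooth_on {0..T} (\<lambda>t. X t [])"
    using sgrp by (auto simp: sgrp_def)
  have shuffle: "X t w = X t [] * X t w" if "t \<in> {0..T}" "w \<in> words d N" for t w
  proof -
    have "pair_shuffle (X t) [] w = X t [] * X t w"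
      using sgrp that by (simp add: sgrp_def words_def)
    then show ?thesis
      by (simp add: pair_shuffle_Nil)
  qed
  have unit_cases: "X t [] \<in> {0, 1}" if "t \<in> {0..T}" for t
    using shuffle[OF that, of "[]"] by auto
  have "continuous_on {0..T} (\<lambda>t. X t [])"
    using smooth by (rule smooth_on_imp_continuous_on)
  moreover have "(\<lambda>t. X t []) ` {0..T} \<subseteq> {0, 1}"
    using unit_cases by blast
  then have "finite ((\<lambda>t. X t []) ` {0..T})"
    by (rule finite_subset) simp
  ultimately have "(\<lambda>t. X t []) constant_on {0..T}"
    by (intro continuous_finite_range_constant) auto
  moreover obtain t0 where t0: "t0 \<in> {0..T}" "X t0 [] = 1"
  proof -
    obtain t0 w where "t0 \<in> {0..T}" "X t0 w \<noteq> 0"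
      using nonzero by (auto simp: fun_eq_iff)
    moreover from this have "w \<in> words d N"
      using tens by (auto simp: tens_def)
    ultimately show ?thesis
      using that shuffle unit_cases by fastforce
  qed
  ultimately show ?thesis
    using t by (metis constant_on_def)
qed

lemma tprod_has_vector_derivative_right:
  assumes "\<And>u. u \<in> words d N \<Longrightarrow> ((\<lambda>t. Z t u) has_vector_derivative Z' u) F"
    and "w \<in> words d N"
  shows "((\<lambda>t. tprod d N c (Z t) w) has_vector_derivative tprod d N c Z' w) F"
  using assms
  by (auto simp: tprod_eq words_drop intro!: has_vector_derivative_sum has_vector_derivative_mult_right)

lemma ck_on_tprod:
  assumes "\<And>u. u \<in> words d N \<Longrightarrow> ck_on k S (\<lambda>t. A t u)"
    and "\<And>u. u \<in> words d N \<Longrightarrow> ck_on k S (\<lambda>t. B t u)"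
    and "w \<in> words d N"
  shows "ck_on k S (\<lambda>t. tprod d N (A t) (B t) w)"
  using assms by (auto simp: tprod_eq words_take words_drop intro!: ck_on_sum ck_on_mult)

lemma ck_on_rinv:
  assumes Z: "\<And>u. u \<in> words d N \<Longrightarrow> ck_on k S (\<lambda>t. Z t u)"
  shows "w \<in> words d N \<Longrightarrow> ck_on k S (\<lambda>t. rinv d N (Z t) w)"
proof (induction w rule: length_induct)
  case (1 w)
  show ?case
  proof (cases "w = []")
    case True
    then show ?thesis by (simp add: ck_on_const)
  next
    case False
    have "ck_on k S (\<lambda>t. \<Sum>i\<in>{1..length w}. Z t (take i w) * rinv d N (Z t) (drop i w))"
      using 1 Z by (auto simp: words_take words_drop intro!: ck_on_sum ck_on_mult)
    then have "ck_on k S (\<lambda>t. - (\<Sum>i\<in>{1..length w}. Z t (take i w) * rinv d N (Z t) (drop i w)))"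
      by (rule ck_on_bounded_linear[OF bounded_linear_minus[OF bounded_linear_ident]])
    then show ?thesis
      using 1 False by (subst rinv.simps) simp
  qed
qed

lemma sgrp_tens: "sgrp d N T X \<Longrightarrow> t \<in> {0..T} \<Longrightarrow> X t \<in> tens d N"
  by (simp add: sgrp_def)

lemma sgrp_smooth_on: "sgrp d N T X \<Longrightarrow> w \<in> words d N \<Longrightarrow> smooth_on {0..T} (\<lambda>t. X t w)"
  by (simp add: sgrp_def)

lemma sgrp_has_vector_derivative:
  assumes "sgrp d N T X"
  obtains X' where
    "\<And>u t. u \<in> words d N \<Longrightarrow> t \<in> {0..T} \<Longrightarrow>
       ((\<lambda>t. X t u) has_vector_derivative X' u t) (at t within {0..T})"
    and "\<And>u. u \<in> words d N \<Longrightarrow> smooth_on {0..T} (X' u)"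
proof -
  have "\<forall>u\<in>words d N. \<exists>h'. (\<forall>t\<in>{0..T}.
      ((\<lambda>t. X t u) has_vector_derivative h' t) (at t within {0..T})) \<and> smooth_on {0..T} h'"
    using sgrp_smooth_on[OF assms] smooth_on_has_vector_derivative by blast
  then obtain X' where "\<forall>u\<in>words d N. (\<forall>t\<in>{0..T}.
      ((\<lambda>t. X t u) has_vector_derivative X' u t) (at t within {0..T})) \<and> smooth_on {0..T} (X' u)"
    by (rule bchoice[THEN exE])
  then show ?thesis
    using that by blast
qed

lemma ck_on_tinv:
  assumes "sgrp d N T X" and "u \<in> words d N"
  shows "ck_on k {0..T} (\<lambda>t. tinv d N (X t) u)"
proof (rule ck_on_cong)
  show "ck_on k {0..T} (\<lambda>t. rinv d N (X t) u)"
    using assms by (intro ck_on_rinv smooth_on_imp_ck_on sgrp_smooth_on)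
  show "rinv d N (X t) u = tinv d N (X t) u" if "t \<in> {0..T}" for t
    using assms(1) that by (simp add: tinv_eq_rinv sgrp_tens sgrp_unit)
qed

lemma incr_self: "sgrp d N T X \<Longrightarrow> s \<in> {0..T} \<Longrightarrow> incr d N X s s = tunit"
  by (simp add: incr_def tprod_tinv_left sgrp_tens sgrp_unit)

lemma incr_Nil:
  "sgrp d N T X \<Longrightarrow> s \<in> {0..T} \<Longrightarrow> t \<in> {0..T} \<Longrightarrow> incr d N X s t [] = 1"
  by (simp add: incr_def tprod_eq tinv_eq_rinv sgrp_tens sgrp_unit)

lemma incr_has_diag_deriv:
  assumes "sgrp d N T X" and "s \<in> {0..T}" and "w \<in> words d N"
  shows "((\<lambda>t. incr d N X s t w) has_vector_derivative diag_deriv d N T X s w) (at s within {0..T})"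
proof -
  obtain X' where "\<And>u. u \<in> words d N \<Longrightarrow>
      ((\<lambda>t. X t u) has_vector_derivative X' u s) (at s within {0..T})"
    using sgrp_has_vector_derivative[OF assms(1)] assms(2) by metis
  then have "((\<lambda>t. incr d N X s t w) has_vector_derivative tprod d N (tinv d N (X s)) (\<lambda>u. X' u s) w)
      (at s within {0..T})"
    unfolding incr_def using assms(3) by (rule tprod_has_vector_derivative_right)
  then show ?thesis
    unfolding diag_deriv_def by (metis vector_derivative_works differentiableI_vector)
qed

lemma diag_deriv_Nil:
  assumes "T > 0" and "sgrp d N T X" and "s \<in> {0..T}"
  shows "diag_deriv d N T X s [] = 0"
proof -
  have "((\<lambda>t. 1) has_vector_derivative 0) (at s within {0..T})"
    by (rule has_vector_derivative_const)
  then have "((\<lambda>t. incr d N X s t []) has_vector_derivative 0) (at s within {0..T})"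
    by (rule has_vector_derivative_weaken[where S="{0..T}"]) (use assms(2,3) in \<open>auto simp: incr_Nil\<close>)
  then show ?thesis
    unfolding diag_deriv_def using assms(1,3) by (intro vector_derivative_within_closed_interval) auto
qed

lemma ck_on_diag_deriv:
  assumes "T > 0" and "sgrp d N T X" and "w \<in> words d N"
  shows "ck_on k {0..T} (\<lambda>s. diag_deriv d N T X s w)"
proof -
  obtain X' where X': "\<And>u t. u \<in> words d N \<Longrightarrow> t \<in> {0..T} \<Longrightarrow>
      ((\<lambda>t. X t u) has_vector_derivative X' u t) (at t within {0..T})"
    and smooth: "\<And>u. u \<in> words d N \<Longrightarrow> smooth_on {0..T} (X' u)"
    using sgrp_has_vector_derivative[OF assms(2)] by metis
  show ?thesis
  proof (rule ck_on_cong)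
    show "ck_on k {0..T} (\<lambda>s. tprod d N (tinv d N (X s)) (\<lambda>u. X' u s) w)"
      using assms(2,3) smooth by (intro ck_on_tprod ck_on_tinv smooth_on_imp_ck_on)
    fix s assume s: "s \<in> {0..T}"
    have "((\<lambda>t. incr d N X s t w) has_vector_derivative tprod d N (tinv d N (X s)) (\<lambda>u. X' u s) w)
        (at s within {0..T})"
      unfolding incr_def using X'[OF _ s] assms(3) by (rule tprod_has_vector_derivative_right)
    then show "tprod d N (tinv d N (X s)) (\<lambda>u. X' u s) w = diag_deriv d N T X s w"
      unfolding diag_deriv_def using assms(1) s by (metis vector_derivative_within_closed_interval)
  qed
qed

lemma incr_expansion_has_vector_derivative:
  fixes v :: "nat list \<Rightarrow> 'a::real_normed_vector"
  assumes "T > 0" and "sgrp d N T X" and s: "s \<in> {0..T}"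
  shows "((\<lambda>t. \<Sum>w\<in>words d N - {[]}. incr d N X s t w *\<^sub>R v w) has_vector_derivative
    (\<Sum>w\<in>words d N. diag_deriv d N T X s w *\<^sub>R v w)) (at s within {0..T})"
proof -
  have "(\<Sum>w\<in>words d N. diag_deriv d N T X s w *\<^sub>R v w)
      = (\<Sum>w\<in>words d N - {[]}. diag_deriv d N T X s w *\<^sub>R v w)"
    using diag_deriv_Nil[OF assms] by (simp add: sum.remove[OF finite_words words_Nil])
  moreover have "((\<lambda>t. incr d N X s t w *\<^sub>R v w) has_vector_derivative diag_deriv d N T X s w *\<^sub>R v w)
      (at s within {0..T})" if "w \<in> words d N - {[]}" for w
    using incr_has_diag_deriv[OF assms(2) s] that
    by (intro bounded_linear.has_vector_derivative[OF bounded_linear_scaleR_left]) auto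
  ultimately show ?thesis
    by (auto intro!: has_vector_derivative_sum)
qed

lemma incr_expansion_self:
  fixes v :: "nat list \<Rightarrow> 'a::real_normed_vector"
  shows "sgrp d N T X \<Longrightarrow> s \<in> {0..T} \<Longrightarrow> (\<Sum>w\<in>words d N - {[]}. incr d N X s s w *\<^sub>R v w) = 0"
  by (simp add: incr_self tunit_def)

lemma is_solution_iff_has_vector_derivative:
  assumes "T > 0" and sgrp: "sgrp d N T X" and f: "\<forall>i\<in>{1..d}. smooth_bdd (f i)"
  shows "is_solution d N T X f Y \<longleftrightarrow> (\<forall>s\<in>{0..T}. (Y has_vector_derivative
    (\<Sum>w\<in>words d N. diag_deriv d N T X s w *\<^sub>R fw f w (Y s))) (at s within {0..T}))"
proof -
  have "smooth_field (fw f w)" if "w \<in> words d N" for w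
    using f that by (intro smooth_field_fw) (auto simp: words_def)
  then have "smooth_on {0..T} Y" if "\<forall>s\<in>{0..T}. (Y has_vector_derivative
      (\<Sum>w\<in>words d N. diag_deriv d N T X s w *\<^sub>R fw f w (Y s))) (at s within {0..T})"
    using that \<open>T > 0\<close> finite_words ck_on_diag_deriv[OF \<open>T > 0\<close> sgrp]
    by (intro smooth_on_ode_solution[where W = "words d N" and c = "\<lambda>w s. diag_deriv d N T X s w"
          and g = "fw f"]) auto
  then show ?thesis
    unfolding is_solution_def by blast
qed

theorem proposition2p20:
  fixes d N :: nat and T :: real
    and X :: "real \<Rightarrow> nat list \<Rightarrow> real"
    and f :: "nat \<Rightarrow> real ^ 'e \<Rightarrow> real ^ 'e"
    and Y :: "real \<Rightarrow> real ^ 'e"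
  assumes "T > 0" and "d \<ge> 1"
    and "sgrp d N T X"
    and "\<forall>i\<in>{1..d}. smooth_bdd (f i)"
  shows "is_solution d N T X f Y \<longleftrightarrow>
    (\<forall>s\<in>{0..T}.
       (\<lambda>t. norm (Y t - Y s - (\<Sum>w\<in>words d N - {[]}. incr d N X s t w *\<^sub>R fw f w (Y s))))
         \<in> o[at s within {0..T}](\<lambda>t. t - s))"
  unfolding is_solution_iff_has_vector_derivative[OF assms(1,3,4)]
proof (intro ball_cong refl)
  fix s assume "s \<in> {0..T}"
  then show "(Y has_vector_derivative (\<Sum>w\<in>words d N. diag_deriv d N T X s w *\<^sub>R fw f w (Y s)))
      (at s within {0..T}) \<longleftrightarrow>
    (\<lambda>t. norm (Y t - Y s - (\<Sum>w\<in>words d N - {[]}. incr d N X s t w *\<^sub>R fw f w (Y s))))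
      \<in> o[at s within {0..T}](\<lambda>t. t - s)"
    using assms(1,3)
    by (intro has_vector_derivative_iff_smallo_remainder incr_expansion_has_vector_derivative
        incr_expansion_self)
qed

end
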